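(* Let $n\ge1$, $w\in\mathbb{R}^n$ with $w\neq0$, and $\lambda>0$. Let $(\alpha^*,b^* )$ be a minimizer of $$\min_{\alpha>0,\; b\in\{-1,0,1\}^n}\; \tfrac12\sum_{i=1}^n \lambda(\alpha b_i - w_i)^2,$$ and set $\Delta^*=\alpha^*/2$. Then the set $S=\{i: |w_i|>\Delta^*\}$ is nonempty, $$\alpha^*=\frac{1}{|S|}\sum_{i\in S}|w_i|,$$ and $\Delta^*$ is a maximizer, over $\Delta\in(0,\max_i|w_i|)$, of $$F(\Delta)=\frac{1}{|\{i:|w_i|>\Delta\}|}\Big(\sum_{i:\,|w_i|>\Delta}|w_i|\Big)^2 .$$ That is, $\alpha^*$ coincides with the ternary-weight-network scaling with threshold $\Delta^*=\alpha^*/2$.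
   Context: This is the case of a layer-wise loss-aware ternarization problem $\min \tfrac12\|\alpha b-w\|_{D}^2$ in which the diagonal curvature matrix is $D=\lambda I$. *)

theory Defs
  imports "HOL-Analysis.Analysis"
begin

definition ternary :: "real ^ 'n \<Rightarrow> bool" where
  "ternary b \<longleftrightarrow> (\<forall>i. b $ i \<in> {-1, 0, 1})"

text \<open>Loss-aware objective with diagonal curvature D = lambda I.\<close>
definition tern_obj :: "real \<Rightarrow> real ^ 'n \<Rightarrow> real \<Rightarrow> real ^ 'n \<Rightarrow> real" where
  "tern_obj lam w \<alpha> b = (1/2) * (\<Sum>i\<in>UNIV. lam * (\<alpha> * b $ i - w $ i)^2)"

definition above :: "real ^ 'n \<Rightarrow> real \<Rightarrow> 'n set" where
  "above w \<Delta> = {i. \<bar>w $ i\<bar> > \<Delta>}"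

definition twnF :: "real ^ 'n \<Rightarrow> real \<Rightarrow> real" where
  "twnF w \<Delta> = (\<Sum>i\<in>above w \<Delta>. \<bar>w $ i\<bar>)^2 / real (card (above w \<Delta>))"

end

theory Submission
  imports Defs
begin

text \<open>For a fixed scale \<open>a\<close> the objective separates over the coordinates, and each
coordinate is minimised by rounding \<open>w$i/a\<close> to the nearest ternary value, i.e. by the
sign pattern of \<open>w\<close> on the index set \<open>S = above w (a/2)\<close>. For a sign pattern on a set \<open>T\<close>
the objective is a quadratic in \<open>a\<close> with vertex at the mean of \<open>\<bar>w$i\<bar>\<close> over \<open>T\<close> and
minimum value \<open>\<lambda>/2 (\<parallel>w\<parallel>\<^sup>2 - F(T))\<close>, where \<open>F(T) = (\<Sum>\<^sub>T \<bar>w$i\<bar>)\<^sup>2 / |T|\<close>. Comparing the minimiser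
with the sign patterns on \<open>S\<close> and on every \<open>above w \<Delta>\<close> forces \<open>\<alpha>\<close> to be the mean over \<open>S\<close>
and \<open>F(S)\<close> to dominate every \<open>F(above w \<Delta>)\<close>.\<close>

definition sign_pattern :: "real ^ 'n \<Rightarrow> 'n set \<Rightarrow> real ^ 'n" where
  "sign_pattern w T = (\<chi> i. if i \<in> T then (if w $ i \<ge> 0 then 1 else -1) else 0)"

definition mean_abs :: "real ^ 'n \<Rightarrow> 'n set \<Rightarrow> real" where
  "mean_abs w T = (\<Sum>i\<in>T. \<bar>w $ i\<bar>) / real (card T)"

definition abs_gain :: "real ^ 'n \<Rightarrow> 'n set \<Rightarrow> real" where
  "abs_gain w T = (\<Sum>i\<in>T. \<bar>w $ i\<bar>)^2 / real (card T)"

lemma twnF_eq_abs_gain: "twnF w \<Delta> = abs_gain w (above w \<Delta>)"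
  by (simp add: twnF_def abs_gain_def)

lemma ternary_sign_pattern: "ternary (sign_pattern w T)"
  by (auto simp: ternary_def sign_pattern_def)

lemma sum_sign_pattern:
  fixes w :: "real ^ 'n"
  shows "(\<Sum>i\<in>UNIV. (a * sign_pattern w T $ i - w $ i)^2)
    = real (card T) * a^2 - 2 * a * (\<Sum>i\<in>T. \<bar>w $ i\<bar>) + norm w ^ 2"
proof -
  have "\<And>i. (a * sign_pattern w T $ i - w $ i)^2
      = (if i \<in> T then a^2 - 2 * a * \<bar>w $ i\<bar> else 0) + (w $ i)^2"
    by (auto simp: sign_pattern_def power2_eq_square algebra_simps abs_if)
  moreover have "norm w ^ 2 = (\<Sum>i\<in>UNIV. (w $ i)^2)"
    by (subst power2_norm_eq_inner) (simp add: inner_vec_def power2_eq_square)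
  ultimately show ?thesis
    by (simp add: sum.distrib sum.If_cases sum_subtractf sum_distrib_left)
qed

text \<open>Completing the square; for \<open>T = {}\<close> both correction terms vanish because \<open>x / 0 = 0\<close>.\<close>

lemma tern_obj_sign_pattern:
  fixes w :: "real ^ 'n"
  shows "tern_obj lam w a (sign_pattern w T)
    = lam / 2 * (real (card T) * (a - mean_abs w T)^2 + norm w ^ 2 - abs_gain w T)"
proof -
  define k where "k = real (card T)"
  define c where "c = (\<Sum>i\<in>T. \<bar>w $ i\<bar>)"
  have "k = 0 \<Longrightarrow> c = 0"
    by (simp add: k_def c_def)
  then have "k * a^2 - 2 * a * c = k * (a - c / k)^2 - c^2 / k"
    by (cases "k = 0") (simp_all add: power2_eq_square field_simps)
  then show ?thesis
    by (simp add: tern_obj_def sum_sign_pattern mean_abs_def abs_gain_def k_def c_def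
        flip: sum_distrib_left)
qed

lemma ternary_rounding_le:
  fixes a x t :: real
  assumes "a > 0" and "t \<in> {-1, 0, 1}"
  shows "(a * (if \<bar>x\<bar> > a / 2 then (if x \<ge> 0 then 1 else -1) else 0) - x)^2 \<le> (a * t - x)^2"
proof -
  define r where "r = (if \<bar>x\<bar> > a / 2 then (if x \<ge> 0 then 1 else -1) else (0::real))"
  have "(t - r) * (a * (t + r) - 2 * x) \<ge> 0"
    using assms(2) by (auto simp: r_def abs_if)
  then have "a * ((t - r) * (a * (t + r) - 2 * x)) \<ge> 0"
    using assms(1) by simp
  moreover have "(a * t - x)^2 - (a * r - x)^2 = a * ((t - r) * (a * (t + r) - 2 * x))"
    by (simp add: power2_eq_square algebra_simps)
  ultimately show ?thesis
    by (simp add: r_def)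
qed

lemma tern_obj_rounding_le:
  fixes w b :: "real ^ 'n"
  assumes "lam \<ge> 0" and "a > 0" and "ternary b"
  shows "tern_obj lam w a (sign_pattern w (above w (a / 2))) \<le> tern_obj lam w a b"
proof -
  have "(a * sign_pattern w (above w (a / 2)) $ i - w $ i)^2 \<le> (a * b $ i - w $ i)^2" for i
    using ternary_rounding_le[OF assms(2), of "b $ i" "w $ i"] assms(3)
    by (simp add: ternary_def sign_pattern_def above_def)
  then show ?thesis
    unfolding tern_obj_def using assms(1) by (intro mult_left_mono sum_mono) auto
qed

lemma mean_abs_pos:
  assumes "T \<noteq> {}" and "\<forall>i\<in>T. w $ i \<noteq> 0"
  shows "mean_abs w T > 0"
proof -
  have "(\<Sum>i\<in>T. \<bar>w $ i\<bar>) > 0"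
    using assms by (intro sum_pos) auto
  then show ?thesis
    using assms(1) by (simp add: mean_abs_def card_gt_0_iff)
qed

lemma abs_gain_pos:
  assumes "T \<noteq> {}" and "\<forall>i\<in>T. w $ i \<noteq> 0"
  shows "abs_gain w T > 0"
  using mean_abs_pos[OF assms] assms(1)
  by (simp add: abs_gain_def mean_abs_def card_gt_0_iff zero_less_divide_iff)

lemma Max_abs_pos:
  fixes w :: "real ^ 'n"
  assumes "w \<noteq> 0"
  shows "(MAX i. \<bar>w $ i\<bar>) > 0"
proof -
  obtain i where "w $ i \<noteq> 0"
    using assms by (metis vec_eq_iff zero_index)
  moreover have "\<bar>w $ i\<bar> \<le> (MAX i. \<bar>w $ i\<bar>)"
    by simp
  ultimately show ?thesis
    by linarith
qed

lemma above_nonempty_iff: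
  fixes w :: "real ^ 'n"
  shows "above w \<Delta> \<noteq> {} \<longleftrightarrow> \<Delta> < (MAX i. \<bar>w $ i\<bar>)"
proof
  assume "above w \<Delta> \<noteq> {}"
  then obtain i where "\<Delta> < \<bar>w $ i\<bar>"
    by (auto simp: above_def)
  also have "\<dots> \<le> (MAX i. \<bar>w $ i\<bar>)"
    by simp
  finally show "\<Delta> < (MAX i. \<bar>w $ i\<bar>)" .
next
  assume "\<Delta> < (MAX i. \<bar>w $ i\<bar>)"
  moreover have "(MAX i. \<bar>w $ i\<bar>) \<in> range (\<lambda>i. \<bar>w $ i\<bar>)"
    by (rule Max_in) auto
  then obtain j where "\<bar>w $ j\<bar> = (MAX i. \<bar>w $ i\<bar>)"
    by (metis imageE)
  ultimately have "j \<in> above w \<Delta>"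
    by (simp add: above_def)
  then show "above w \<Delta> \<noteq> {}"
    by blast
qed

lemma above_nonzero: "\<Delta> \<ge> 0 \<Longrightarrow> \<forall>i\<in>above w \<Delta>. w $ i \<noteq> 0"
  by (auto simp: above_def)

lemma abs_gain_above_pos:
  fixes w :: "real ^ 'n"
  assumes "\<Delta> \<ge> 0" and "\<Delta> < (MAX i. \<bar>w $ i\<bar>)"
  shows "abs_gain w (above w \<Delta>) > 0"
  using assms by (intro abs_gain_pos above_nonzero) (simp_all add: above_nonempty_iff)

text \<open>Lower bound from rounding at the minimiser's own scale, upper bound from the optimal
scale of the sign pattern on \<open>T\<close>.\<close>

lemma minimizer_abs_gain_le:
  fixes w b :: "real ^ 'n"
  assumes "lam > 0" and "\<alpha> > 0" and "ternary b"
    and "\<forall>\<alpha>' b'. \<alpha>' > 0 \<and> ternary b' \<longrightarrow> tern_obj lam w \<alpha> b \<le> tern_obj lam w \<alpha>' b'"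
    and "T \<noteq> {}" and "\<forall>i\<in>T. w $ i \<noteq> 0"
  defines "S \<equiv> above w (\<alpha> / 2)"
  shows "real (card S) * (\<alpha> - mean_abs w S)^2 + abs_gain w T \<le> abs_gain w S"
proof -
  have "lam / 2 * (real (card S) * (\<alpha> - mean_abs w S)^2 + norm w ^ 2 - abs_gain w S)
      \<le> tern_obj lam w \<alpha> b"
    using tern_obj_rounding_le[OF _ assms(2,3)] assms(1)
    by (simp add: S_def tern_obj_sign_pattern)
  also have "\<dots> \<le> tern_obj lam w (mean_abs w T) (sign_pattern w T)"
    using assms(4) mean_abs_pos[OF assms(5,6)] ternary_sign_pattern by blast
  also have "\<dots> = lam / 2 * (norm w ^ 2 - abs_gain w T)"
    by (simp add: tern_obj_sign_pattern)
  finally show ?thesis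
    using assms(1) by (simp only: mult_le_cancel_left_pos half_gt_zero)
qed

lemma minimizer_abs_gain_above_le:
  fixes w b :: "real ^ 'n"
  assumes "lam > 0" and "\<alpha> > 0" and "ternary b"
    and "\<forall>\<alpha>' b'. \<alpha>' > 0 \<and> ternary b' \<longrightarrow> tern_obj lam w \<alpha> b \<le> tern_obj lam w \<alpha>' b'"
    and "\<Delta> \<ge> 0" and "\<Delta> < (MAX i. \<bar>w $ i\<bar>)"
  shows "abs_gain w (above w \<Delta>) \<le> abs_gain w (above w (\<alpha> / 2))"
proof -
  have "above w \<Delta> \<noteq> {}" and "\<forall>i\<in>above w \<Delta>. w $ i \<noteq> 0"
    using assms(5,6) above_nonzero[of \<Delta> w] by (simp_all add: above_nonempty_iff)
  then have "real (card (above w (\<alpha> / 2))) * (\<alpha> - mean_abs w (above w (\<alpha> / 2)))^2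
      + abs_gain w (above w \<Delta>) \<le> abs_gain w (above w (\<alpha> / 2))"
    by (rule minimizer_abs_gain_le[OF assms(1-4)])
  moreover have "0 \<le> real (card (above w (\<alpha> / 2))) * (\<alpha> - mean_abs w (above w (\<alpha> / 2)))^2"
    by simp
  ultimately show ?thesis
    by linarith
qed

theorem corollary1:
  fixes w :: "real ^ 'n" and lam \<alpha> :: real and b :: "real ^ 'n"
  assumes "w \<noteq> 0" and "lam > 0"
    and "\<alpha> > 0" and "ternary b"
    and "\<forall>\<alpha>' b'. \<alpha>' > 0 \<and> ternary b' \<longrightarrow> tern_obj lam w \<alpha> b \<le> tern_obj lam w \<alpha>' b'"
  shows "above w (\<alpha>/2) \<noteq> {}
    \<and> \<alpha> = (\<Sum>i\<in>above w (\<alpha>/2). \<bar>w $ i\<bar>) / real (card (above w (\<alpha>/2)))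
    \<and> \<alpha>/2 \<in> {0<..<(MAX i. \<bar>w $ i\<bar>)}
    \<and> (\<forall>\<Delta>\<in>{0<..<(MAX i. \<bar>w $ i\<bar>)}. twnF w \<Delta> \<le> twnF w (\<alpha>/2))"
proof -
  define S where "S = above w (\<alpha> / 2)"
  define M where "M = (MAX i. \<bar>w $ i\<bar>)"
  have gain_above_le: "abs_gain w (above w \<Delta>) \<le> abs_gain w S" if "\<Delta> \<in> {0<..<M}" for \<Delta>
    using minimizer_abs_gain_above_le[OF assms(2-5), of \<Delta>] that by (simp add: S_def M_def)
  have "M > 0"
    using Max_abs_pos[OF assms(1)] by (simp add: M_def)
  then have "abs_gain w S > 0"
    using gain_above_le[of "M / 2"] abs_gain_above_pos[of "M / 2" w, folded M_def] by simp
  then have "S \<noteq> {}"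
    by (auto simp: abs_gain_def)
  moreover have "\<forall>i\<in>S. w $ i \<noteq> 0"
    using above_nonzero[of "\<alpha> / 2" w] assms(3) by (simp add: S_def)
  ultimately have "real (card S) * (\<alpha> - mean_abs w S)^2 + abs_gain w S \<le> abs_gain w S"
    by (rule minimizer_abs_gain_le[OF assms(2-5), folded S_def])
  with \<open>S \<noteq> {}\<close> have "\<alpha> = mean_abs w S"
    by (simp add: mult_le_0_iff)
  moreover have "\<alpha> / 2 \<in> {0<..<M}"
    using \<open>S \<noteq> {}\<close> above_nonempty_iff[of w "\<alpha> / 2", folded M_def] assms(3) by (simp add: S_def)
  ultimately show ?thesis
    using \<open>S \<noteq> {}\<close> gain_above_le by (simp add: S_def M_def mean_abs_def twnF_eq_abs_gain)
qed

end
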